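(* Let $a\in\mathrm{F}^\uparrow$ with $\mathrm{supp}(a)=(0,r)$, let $\alpha_0\in(0,r)\cap A$, set $\alpha_k=(\alpha_0)a^k$ ($k\in\mathbb Z$), and let $b\in\mathrm{F}^\uparrow$ with $\mathrm{supp}(b)=(\alpha_0,\alpha_1)$. Let $d$ be a generator of the (cyclic) centralizer of $b$ in $\mathrm{F}_{(\alpha_0,\alpha_1)}$. Then the centralizer of the set $\{a^{-k}ba^k\mid k\in\mathbb Z\}$ in $\mathrm{F}$ is the subgroup generated by $\{a^{-k}da^k\mid k\in\mathbb Z\}$.
   Context: Fix an admissible triple $(r,\Lambda,A)$: $r>0$, $\Lambda\le\mathbb R^*_+$ a nontrivial multiplicative subgroup, $A\subseteq\mathbb R$ an additive subgroup with $r\in A$ and $\Lambda A\subseteq A$. $\mathrm{F}=\mathrm{F}(r,\Lambda,A)$ is the group of homeomorphisms of $[0,r)$ that are piecewise affine with finitely many breakpoints, all slopes in $\Lambda$, breakpoints and their images in $A$; maps act on the right. $\mathrm{F}^\uparrow=\{x\in\mathrm{F}\mid(t)x\ge t\ \forall t\}$; $\mathrm{supp}(x)$ is the set of non-fixed points; $\mathrm{F}_S=\{x\in\mathrm{F}\mid\mathrm{supp}(x)\subseteq S\}$. *)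

theory Defs
  imports "HOL-Analysis.Analysis" "HOL-Algebra.Generated_Groups"
begin

definition admissible :: "real \<Rightarrow> real set \<Rightarrow> real set \<Rightarrow> bool" where
  "admissible r Lam A \<longleftrightarrow>
     r > 0 \<and>
     Lam \<subseteq> {0<..} \<and> 1 \<in> Lam \<and> (\<forall>x\<in>Lam. \<forall>y\<in>Lam. x * y \<in> Lam) \<and>
     (\<forall>x\<in>Lam. inverse x \<in> Lam) \<and> (\<exists>x\<in>Lam. x \<noteq> 1) \<and>
     0 \<in> A \<and> (\<forall>x\<in>A. \<forall>y\<in>A. x + y \<in> A) \<and> (\<forall>x\<in>A. - x \<in> A) \<and>
     r \<in> A \<and> (\<forall>l\<in>Lam. \<forall>x\<in>A. l * x \<in> A)"

text \<open>Elements of F(r,Lambda,A), as maps real => real that are the identity outside [0,r).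
  B is a finite set of (candidate) breakpoints in (0,r); between consecutive points of B
  the map is affine with slope in Lambda; breakpoints and their images lie in A.\<close>
definition inF :: "real \<Rightarrow> real set \<Rightarrow> real set \<Rightarrow> (real \<Rightarrow> real) \<Rightarrow> bool" where
  "inF r Lam A f \<longleftrightarrow>
     bij_betw f {0..<r} {0..<r} \<and> continuous_on {0..<r} f \<and>
     (\<forall>t. t \<notin> {0..<r} \<longrightarrow> f t = t) \<and>
     (\<exists>B. finite B \<and> B \<subseteq> {0<..<r} \<and> B \<subseteq> A \<and> f ` B \<subseteq> A \<and>
        (\<forall>s t. 0 \<le> s \<and> s < t \<and> t < r \<and> {s<..<t} \<inter> B = {} \<longrightarrow>
           (\<exists>l\<in>Lam. \<exists>c. \<forall>u\<in>{s..t}. f u = l * u + c)))"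

definition Fset :: "real \<Rightarrow> real set \<Rightarrow> real set \<Rightarrow> (real \<Rightarrow> real) set" where
  "Fset r Lam A = {f. inF r Lam A f}"

text \<open>The group F with right action: (t)(x y) = ((t)x)y, i.e. x \<otimes> y = y \<circ> x.\<close>
definition Fgrp :: "real \<Rightarrow> real set \<Rightarrow> real set \<Rightarrow> (real \<Rightarrow> real) monoid" where
  "Fgrp r Lam A = \<lparr>carrier = Fset r Lam A, monoid.mult = (\<lambda>x y. y \<circ> x), one = id\<rparr>"

definition supp :: "(real \<Rightarrow> real) \<Rightarrow> real set" where
  "supp x = {t. x t \<noteq> t}"

definition Fup :: "real \<Rightarrow> real set \<Rightarrow> real set \<Rightarrow> (real \<Rightarrow> real) set" where
  "Fup r Lam A = {x \<in> Fset r Lam A. \<forall>t\<in>{0..<r}. x t \<ge> t}"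

definition Fsupp :: "real \<Rightarrow> real set \<Rightarrow> real set \<Rightarrow> real set \<Rightarrow> (real \<Rightarrow> real) set" where
  "Fsupp r Lam A S = {x \<in> Fset r Lam A. supp x \<subseteq> S}"

definition centralizer_in :: "('a, 'b) monoid_scheme \<Rightarrow> 'a set \<Rightarrow> 'a set \<Rightarrow> 'a set" where
  "centralizer_in G H X = {x \<in> H. \<forall>y\<in>X. x \<otimes>\<^bsub>G\<^esub> y = y \<otimes>\<^bsub>G\<^esub> x}"

end

theory Submission
  imports Defs
begin

(* Because a moves every point of (0,r) upward and is continuous,
   the points alpha_k increase and tile (0,r) by the intervals I_k = (alpha_k, alpha_k+1); the
   k-th translate of b has support exactly I_k.  Let x centralize all translates of b.
   (1) x permutes each support I_k, so, being increasing, it fixes every alpha_k.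
   (2) Hence the restriction of x to [alpha_k, alpha_k+1] is again in F and commutes with the k-th
       translate of b; conjugating it back by a^k gives an element of F_(alpha0, alpha1)
       commuting with b, i.e. a power of d.  So each restriction lies in the subgroup generated
       by the translates of d.
   (3) x is the identity on every tile not containing one of its finitely many breakpoints, so
       x is a finite product of its restrictions.
   Conversely the translates of d commute with all translates of b (same index: conjugate
   d b = b d; different index: disjoint supports). *)

definition restr :: "real \<Rightarrow> real \<Rightarrow> (real \<Rightarrow> real) \<Rightarrow> real \<Rightarrow> real" where
  "restr p q f = (\<lambda>t. if t \<in> {p..q} then f t else t)"

lemma supp_conjugate:
  assumes "\<And>t. h (hi t) = t" "\<And>t. hi (h t) = t"
  shows "supp (h \<circ> y \<circ> hi) = h ` supp y"
proof -
  have "t \<in> supp (h \<circ> y \<circ> hi) \<longleftrightarrow> hi t \<in> supp y" for t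
    using assms(1)[of t] assms(2)[of "y (hi t)"] unfolding supp_def by auto
  then show ?thesis using assms by (auto intro: image_eqI[where x = "hi _"])
qed

lemma supp_closed: "inj x \<Longrightarrow> t \<in> supp x \<Longrightarrow> x t \<in> supp x"
  unfolding supp_def by (auto dest: injD)

lemma disjoint_supp_commute:
  assumes "inj x" "inj y" "supp x \<inter> supp y = {}"
  shows "x \<circ> y = y \<circ> x"
proof
  fix t
  show "(x \<circ> y) t = (y \<circ> x) t"
  proof (cases "t \<in> supp y")
    case True
    then have "y t \<in> supp y" using supp_closed[OF assms(2)] by blast
    then have "x t = t" "x (y t) = y t" using True assms(3) unfolding supp_def by auto
    then show ?thesis by simp
  next
    case False
    then have "x t \<in> supp x \<or> x t = t"
      using supp_closed[OF assms(1), of t] unfolding supp_def by auto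
    then have "y (x t) = x t" using assms(3) False unfolding supp_def by auto
    then show ?thesis using False unfolding supp_def by simp
  qed
qed

lemma commuting_bij_preserves_supp:
  assumes "bij x" "x \<circ> g = g \<circ> x"
  shows "x ` supp g = supp g"
proof -
  have "x t \<in> supp g \<longleftrightarrow> t \<in> supp g" for t
  proof -
    have "g (x t) = x (g t)" using fun_cong[OF assms(2), of t] by simp
    moreover have "x (g t) = x t \<longleftrightarrow> g t = t" using bij_is_inj[OF assms(1)] by (simp add: inj_eq)
    ultimately show ?thesis unfolding supp_def by simp
  qed
  then have "x -` supp g = supp g" by auto
  moreover have "x ` (x -` supp g) = supp g"
    by (rule surj_image_vimage_eq[OF bij_is_surj[OF assms(1)]])
  ultimately show ?thesis by simp
qed

lemma restr_commute:
  assumes "x \<circ> g = g \<circ> x" "inj g" "supp g \<subseteq> {p..q}"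
  shows "restr p q x \<circ> g = g \<circ> restr p q x"
proof
  fix t
  have "x (g t) = g (x t)" using fun_cong[OF assms(1), of t] by simp
  moreover have "g t \<in> {p..q} \<longleftrightarrow> t \<in> {p..q}"
  proof (cases "t \<in> supp g")
    case True then show ?thesis using supp_closed[OF assms(2) True] assms(3) by blast
  qed (simp add: supp_def)
  moreover have "g t = t" if "t \<notin> {p..q}" using that assms(3) unfolding supp_def by auto
  ultimately show "(restr p q x \<circ> g) t = (g \<circ> restr p q x) t"
    unfolding restr_def by auto
qed

context group
begin

lemma conj_hom: "c \<in> carrier G \<Longrightarrow> (\<lambda>w. inv c \<otimes> w \<otimes> c) \<in> hom G G"
  by (rule homI) (simp_all add: m_assoc[symmetric] inv_solve_right)

lemma conj_commute:
  assumes "c \<in> carrier G" "x \<in> carrier G" "y \<in> carrier G" "x \<otimes> y = y \<otimes> x"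
  shows "(inv c \<otimes> x \<otimes> c) \<otimes> (inv c \<otimes> y \<otimes> c) = (inv c \<otimes> y \<otimes> c) \<otimes> (inv c \<otimes> x \<otimes> c)"
  using hom_mult[OF conj_hom[OF assms(1)]] assms by metis

lemma conj_cancel:
  assumes "c \<in> carrier G" "y \<in> carrier G"
  shows "inv c \<otimes> (c \<otimes> y \<otimes> inv c) \<otimes> c = y" "c \<otimes> (inv c \<otimes> y \<otimes> c) \<otimes> inv c = y"
  using assms by (simp_all add: m_assoc, simp_all add: m_assoc[symmetric])

lemma conj_generate:
  assumes "c \<in> carrier G" "T \<subseteq> carrier G"
  shows "(\<lambda>w. inv c \<otimes> w \<otimes> c) ` generate G T = generate G ((\<lambda>w. inv c \<otimes> w \<otimes> c) ` T)"
proof -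
  interpret conj: group_hom G G "\<lambda>w. inv c \<otimes> w \<otimes> c"
    using conj_hom[OF assms(1)] by unfold_locales
  show ?thesis using conj.generate_img[OF assms(2)] by simp
qed

lemma centralizer_subgroup:
  assumes "X \<subseteq> carrier G"
  shows "subgroup (centralizer_in G (carrier G) X) G"
proof (rule subgroupI)
  show "centralizer_in G (carrier G) X \<subseteq> carrier G" unfolding centralizer_in_def by auto
  have "\<one> \<in> centralizer_in G (carrier G) X" unfolding centralizer_in_def using assms by auto
  then show "centralizer_in G (carrier G) X \<noteq> {}" by auto
next
  fix x y assume x: "x \<in> centralizer_in G (carrier G) X" and y: "y \<in> centralizer_in G (carrier G) X"
  have xc: "x \<in> carrier G" and xz: "\<And>z. z \<in> X \<Longrightarrow> x \<otimes> z = z \<otimes> x"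
    using x unfolding centralizer_in_def by auto
  have yc: "y \<in> carrier G" and yz: "\<And>z. z \<in> X \<Longrightarrow> y \<otimes> z = z \<otimes> y"
    using y unfolding centralizer_in_def by auto
  have "inv x \<otimes> z = z \<otimes> inv x" if z: "z \<in> X" for z
  proof -
    have zc: "z \<in> carrier G" using assms z by auto
    have "inv x \<otimes> z = inv x \<otimes> (z \<otimes> x) \<otimes> inv x" using xc zc by (simp add: m_assoc)
    also have "\<dots> = inv x \<otimes> (x \<otimes> z) \<otimes> inv x" using xz[OF z] by simp
    also have "\<dots> = z \<otimes> inv x" using xc zc by (simp add: m_assoc[symmetric])
    finally show ?thesis .
  qed
  then show "inv x \<in> centralizer_in G (carrier G) X" unfolding centralizer_in_def using xc by simp
  have "x \<otimes> y \<otimes> z = z \<otimes> (x \<otimes> y)" if z: "z \<in> X" for z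
  proof -
    have zc: "z \<in> carrier G" using assms z by auto
    have "x \<otimes> y \<otimes> z = x \<otimes> (z \<otimes> y)" using xc yc zc yz[OF z] by (simp add: m_assoc)
    also have "\<dots> = z \<otimes> (x \<otimes> y)" using xc yc zc xz[OF z] by (simp add: m_assoc[symmetric])
    finally show ?thesis .
  qed
  then show "x \<otimes> y \<in> centralizer_in G (carrier G) X" unfolding centralizer_in_def using xc yc by simp
qed

end

lemma strict_mono_int_steps:
  fixes x :: "int \<Rightarrow> 'a::order"
  assumes "\<And>k. x k < x (k + 1)"
  shows "strict_mono x"
proof (rule strict_monoI)
  fix j k :: int assume "j < k"
  then show "x j < x k"
  proof (induction k rule: int_gr_induct)
    case base show ?case by (rule assms)
  next
    case (step k) then show ?case using assms[of k] by order
  qed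
qed

lemma fixed_point_of_limit:
  fixes f :: "real \<Rightarrow> real"
  assumes "continuous_on S f" "u \<longlonglongrightarrow> L" "L \<in> S" "\<And>n. u n \<in> S" "(\<lambda>n. f (u n)) \<longlonglongrightarrow> L"
  shows "f L = L"
  using continuous_on_tendsto_compose[OF assms(1-3)] assms(4,5) by (auto intro: LIMSEQ_unique)

text \<open>Orbits of a continuous map f of (0,r) without fixed points, pushing every point upwards:
  a bi-infinite orbit is unbounded in (0,r) in both directions (a bounded half-orbit would
  converge to a fixed point), so the intervals between consecutive orbit points cover (0,r).\<close>
context
  fixes f :: "real \<Rightarrow> real" and x :: "int \<Rightarrow> real" and r :: real
  assumes cont: "continuous_on {0<..<r} f" and moves: "\<And>t. t \<in> {0<..<r} \<Longrightarrow> t < f t"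
    and orbit_in: "\<And>k. x k \<in> {0<..<r}" and orbit_step: "\<And>k. x (k + 1) = f (x k)"
begin

lemma orbit_strict_mono: "strict_mono x"
  by (rule strict_mono_int_steps) (use moves orbit_in orbit_step in auto)

lemma orbit_unbounded_above:
  assumes t: "t \<in> {0<..<r}"
  shows "\<exists>n. t < x n"
proof (rule ccontr)
  assume "\<nexists>n. t < x n"
  then have bd: "x (int i) \<le> t" for i by (meson not_less)
  define u where "u i = x (int i)" for i
  define L where "L = Sup (range u)"
  have bdd: "bdd_above (range u)" unfolding u_def using bd by (intro bdd_aboveI[where M = t]) auto
  have lim: "u \<longlonglongrightarrow> L" unfolding L_def
    by (rule LIMSEQ_incseq_SUP[OF bdd])
      (auto intro!: monoI simp: u_def strict_mono_less_eq[OF orbit_strict_mono])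
  have "u 0 \<le> L" unfolding L_def by (rule cSUP_upper[OF UNIV_I bdd])
  moreover have "L \<le> t" unfolding L_def using bd by (auto intro: cSUP_least simp: u_def)
  ultimately have L: "L \<in> {0<..<r}" using orbit_in[of 0] t by (auto simp: u_def)
  have "(\<lambda>i. f (u i)) = (\<lambda>i. u (Suc i))"
    by (simp add: u_def fun_eq_iff orbit_step[symmetric] add.commute)
  then have "(\<lambda>i. f (u i)) \<longlonglongrightarrow> L" using LIMSEQ_Suc[OF lim] by simp
  then have "f L = L" using fixed_point_of_limit[OF cont lim L] orbit_in by (auto simp: u_def)
  then show False using moves[OF L] by simp
qed

lemma orbit_unbounded_below:
  assumes t: "t \<in> {0<..<r}"
  shows "\<exists>m. x m \<le> t"
proof (rule ccontr)
  assume "\<nexists>m. x m \<le> t"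
  then have bd: "t \<le> x (- int i)" for i by (meson not_le less_imp_le)
  define v where "v i = x (- int i)" for i
  define L where "L = Inf (range v)"
  have bdd: "bdd_below (range v)" unfolding v_def using bd by (intro bdd_belowI[where m = t]) auto
  have lim: "v \<longlonglongrightarrow> L" unfolding L_def
    by (rule LIMSEQ_decseq_INF[OF bdd])
      (auto intro!: antimonoI simp: v_def strict_mono_less_eq[OF orbit_strict_mono])
  have "L \<le> v 0" unfolding L_def by (rule cINF_lower[OF bdd UNIV_I])
  moreover have "t \<le> L" unfolding L_def using bd by (auto intro: cINF_greatest simp: v_def)
  ultimately have L: "L \<in> {0<..<r}" using orbit_in[of 0] t by (auto simp: v_def)
  have "(\<lambda>i. f (v (Suc i))) = v"
  proof
    fix i
    have "x (- int (Suc i) + 1) = f (x (- int (Suc i)))" by (rule orbit_step)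
    then show "f (v (Suc i)) = v i" by (simp add: v_def)
  qed
  then have "f L = L" using fixed_point_of_limit[OF cont LIMSEQ_Suc[OF lim] L] orbit_in lim
    by (auto simp: v_def)
  then show False using moves[OF L] by simp
qed

lemma orbit_exhausts:
  assumes t: "t \<in> {0<..<r}"
  obtains k where "x k \<le> t" "t < x (k + 1)"
proof -
  obtain n m where n: "t < x n" and m: "x m \<le> t"
    using orbit_unbounded_above[OF t] orbit_unbounded_below[OF t] by blast
  define K where "K = {k. m \<le> k \<and> k \<le> n \<and> x k \<le> t}"
  have fin: "finite K" unfolding K_def by (rule finite_subset[of _ "{m..n}"]) auto
  have "m \<in> K" using m n orbit_strict_mono unfolding K_def by (auto simp: strict_mono_less_eq[symmetric])
  then have "Max K \<in> K" using fin by (intro Max_in) auto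
  then obtain k where k: "k = Max K" "m \<le> k" "k \<le> n" "x k \<le> t" unfolding K_def by auto
  have "k \<noteq> n" using k(4) n by auto
  then have "k + 1 \<in> {m..n}" using k(2,3) by auto
  moreover have "k + 1 \<notin> K" using Max_ge[OF fin, of "k + 1"] k(1) by auto
  ultimately have "t < x (k + 1)" unfolding K_def by auto
  then show thesis using that k(4) by blast
qed

end

lemma finite_gap_above:
  fixes B :: "'a::linorder set"
  assumes "finite B" "u < v"
  obtains t where "u < t" "t \<le> v" "{u<..<t} \<inter> B = {}"
proof
  define T where "T = insert v {\<beta> \<in> B. u < \<beta>}"
  have fin: "finite T" "T \<noteq> {}" unfolding T_def using assms(1) by auto
  show "u < Min T" using Min_in[OF fin] assms(2) unfolding T_def by auto
  show "Min T \<le> v" using Min_le[OF fin(1)] unfolding T_def by auto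
  show "{u<..<Min T} \<inter> B = {}" using Min_le[OF fin(1)] unfolding T_def by fastforce
qed

lemma finite_gap_below:
  fixes B :: "'a::linorder set"
  assumes "finite B" "v < u"
  obtains s where "v \<le> s" "s < u" "s \<in> insert v B" "{s<..<u} \<inter> B = {}"
proof
  define S where "S = insert v {\<beta> \<in> B. \<beta> < u}"
  have fin: "finite S" "S \<noteq> {}" unfolding S_def using assms(1) by auto
  show "Max S < u" "Max S \<in> insert v B" using Max_in[OF fin] assms(2) unfolding S_def by auto
  show "v \<le> Max S" using Max_ge[OF fin(1)] unfolding S_def by auto
  show "{Max S<..<u} \<inter> B = {}" using Max_ge[OF fin(1)] unfolding S_def by fastforce
qed

definition finv :: "real \<Rightarrow> (real \<Rightarrow> real) \<Rightarrow> real \<Rightarrow> real" where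
  "finv r f = (\<lambda>t. if t \<in> {0..<r} then inv_into {0..<r} f t else t)"

locale Fctx =
  fixes r :: real and Lam A :: "real set"
  assumes adm: "admissible r Lam A"
begin

lemma r_pos: "r > 0" using adm unfolding admissible_def by auto
lemma Lam_pos: "l \<in> Lam \<Longrightarrow> l > 0" using adm unfolding admissible_def by auto
lemma one_Lam: "1 \<in> Lam" using adm unfolding admissible_def by auto
lemma Lam_mult: "l \<in> Lam \<Longrightarrow> m \<in> Lam \<Longrightarrow> l * m \<in> Lam" using adm unfolding admissible_def by auto
lemma Lam_inv: "l \<in> Lam \<Longrightarrow> inverse l \<in> Lam" using adm unfolding admissible_def by auto
lemma A0: "0 \<in> A" using adm unfolding admissible_def by auto
lemma A_add: "x \<in> A \<Longrightarrow> y \<in> A \<Longrightarrow> x + y \<in> A" using adm unfolding admissible_def by auto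
lemma A_uminus: "x \<in> A \<Longrightarrow> - x \<in> A" using adm unfolding admissible_def by auto
lemma A_diff: "x \<in> A \<Longrightarrow> y \<in> A \<Longrightarrow> x - y \<in> A"
  using A_add[of x "- y"] A_uminus[of y] by simp
lemma LamA: "l \<in> Lam \<Longrightarrow> x \<in> A \<Longrightarrow> l * x \<in> A" using adm unfolding admissible_def by auto

abbreviation "inFF f \<equiv> inF r Lam A f"
abbreviation "GG \<equiv> Fgrp r Lam A"

lemma inF_basic:
  assumes "inFF f"
  shows "bij_betw f {0..<r} {0..<r}" "continuous_on {0..<r} f" "\<And>t. t \<notin> {0..<r} \<Longrightarrow> f t = t"
proof -
  have "bij_betw f {0..<r} {0..<r} \<and> continuous_on {0..<r} f \<and> (\<forall>t. t \<notin> {0..<r} \<longrightarrow> f t = t)"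
    using assms unfolding inF_def by (elim conjE) (intro conjI)
  then show "bij_betw f {0..<r} {0..<r}" "continuous_on {0..<r} f" "\<And>t. t \<notin> {0..<r} \<Longrightarrow> f t = t"
    by blast+
qed

lemma inF_brk:
  assumes "inFF f"
  obtains B where "finite B" "B \<subseteq> {0<..<r}" "B \<subseteq> A" "f ` B \<subseteq> A"
    "\<And>s t. 0 \<le> s \<Longrightarrow> s < t \<Longrightarrow> t < r \<Longrightarrow> {s<..<t} \<inter> B = {} \<Longrightarrow>
           \<exists>l\<in>Lam. \<exists>c. \<forall>u\<in>{s..t}. f u = l * u + c"
proof -
  have "\<exists>B. finite B \<and> B \<subseteq> {0<..<r} \<and> B \<subseteq> A \<and> f ` B \<subseteq> A \<and>
        (\<forall>s t. 0 \<le> s \<and> s < t \<and> t < r \<and> {s<..<t} \<inter> B = {} \<longrightarrow>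
           (\<exists>l\<in>Lam. \<exists>c. \<forall>u\<in>{s..t}. f u = l * u + c))"
    using assms unfolding inF_def by (elim conjE)
  then show ?thesis using that by metis
qed

lemma inF_intro:
  assumes "bij_betw f {0..<r} {0..<r}" "continuous_on {0..<r} f" "\<And>t. t \<notin> {0..<r} \<Longrightarrow> f t = t"
    "finite B" "B \<subseteq> {0<..<r}" "B \<subseteq> A" "f ` B \<subseteq> A"
    "\<And>s t. 0 \<le> s \<Longrightarrow> s < t \<Longrightarrow> t < r \<Longrightarrow> {s<..<t} \<inter> B = {} \<Longrightarrow>
           \<exists>l\<in>Lam. \<exists>c. \<forall>u\<in>{s..t}. f u = l * u + c"
  shows "inFF f"
  unfolding inF_def
proof (intro conjI allI impI exI[of _ B])
  show "\<exists>l\<in>Lam. \<exists>c. \<forall>u\<in>{s..t}. f u = l * u + c"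
    if "0 \<le> s \<and> s < t \<and> t < r \<and> {s<..<t} \<inter> B = {}" for s t
    using assms(8)[of s t] that by auto
qed (use assms in auto)

text \<open>A continuous bijection of [0,r) is monotone; being onto, it fixes 0 and is increasing.\<close>
lemma inF_zero_mono:
  assumes "inFF f"
  shows "f 0 = 0" and "\<And>u v. 0 \<le> u \<Longrightarrow> u < v \<Longrightarrow> v < r \<Longrightarrow> f u < f v"
proof -
  have bij: "bij_betw f {0..<r} {0..<r}" and cont: "continuous_on {0..<r} f"
    using inF_basic[OF assms] by auto
  have inj: "inj_on f {0..<r}" using bij_betw_imp_inj_on[OF bij] .
  have img: "f ` {0..<r} = {0..<r}" using bij_betw_imp_surj_on[OF bij] .
  have btw: "(f p < f x \<and> f x < f q) \<or> (f q < f x \<and> f x < f p)"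
    if "0 \<le> p" "p < x" "x < q" "q < r" for p x q
  proof (rule continuous_inj_imp_mono[OF that(2,3)])
    have "{p..q} \<subseteq> {0..<r}" using that by auto
    then show "continuous_on {p..q} f" "inj_on f {p..q}"
      using continuous_on_subset[OF cont] inj_on_subset[OF inj] by blast+
  qed
  have rng: "t \<in> {0..<r} \<Longrightarrow> f t \<in> {0..<r}" for t using img by auto
  obtain z where z: "z \<in> {0..<r}" "f z = 0" using img r_pos by (metis atLeastLessThan_iff imageE order_refl)
  show f0: "f 0 = 0"
  proof (rule ccontr)
    assume "f 0 \<noteq> 0"
    then have "z > 0" using z by (cases "z = 0") auto
    then have "(f 0 < f z \<and> f z < f ((z+r)/2)) \<or> (f ((z+r)/2) < f z \<and> f z < f 0)"
      using btw[of 0 z "(z+r)/2"] z by auto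
    moreover have "f 0 \<ge> 0" "f ((z+r)/2) \<ge> 0" using rng[of 0] rng[of "(z+r)/2"] r_pos z by auto
    ultimately show False using z by auto
  qed
  show "f u < f v" if "0 \<le> u" "u < v" "v < r" for u v
  proof (cases "u = 0")
    case True
    have "f v \<noteq> f 0" using inj_on_eq_iff[OF inj, of v 0] that r_pos by auto
    moreover have "f v \<ge> 0" using rng[of v] that by auto
    ultimately show ?thesis using True f0 by auto
  next
    case False
    then have "(f 0 < f u \<and> f u < f v) \<or> (f v < f u \<and> f u < f 0)"
      using btw[of 0 u v] that by auto
    moreover have "f v \<ge> 0" using rng[of v] that by auto
    ultimately show ?thesis using f0 by auto
  qed
qed

lemma inF_le_iff:
  assumes "inFF f" "0 \<le> u" "u < r" "0 \<le> v" "v < r"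
  shows "f u \<le> f v \<longleftrightarrow> u \<le> v" and "f u < f v \<longleftrightarrow> u < v"
  using inF_zero_mono(2)[OF assms(1), of u v] inF_zero_mono(2)[OF assms(1), of v u] assms
  by (cases u v rule: linorder_cases; auto)+

lemma inF_range: "inFF f \<Longrightarrow> t \<in> {0..<r} \<Longrightarrow> f t \<in> {0..<r}"
  using inF_basic(1) by (metis bij_betwE)

lemma inF_pos: "inFF f \<Longrightarrow> t \<in> {0<..<r} \<Longrightarrow> f t \<in> {0<..<r}"
  using inF_zero_mono[of f] inF_range[of f t] by fastforce

lemma inF_finv:
  assumes "inFF f"
  shows "f (finv r f t) = t" "finv r f (f t) = t" "t \<in> {0..<r} \<Longrightarrow> finv r f t \<in> {0..<r}"
proof -
  have bij: "bij_betw f {0..<r} {0..<r}" using inF_basic[OF assms] by auto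
  have img: "f ` {0..<r} = {0..<r}" using bij_betw_imp_surj_on[OF bij] .
  show "f (finv r f t) = t"
    unfolding finv_def using img f_inv_into_f[of t f "{0..<r}"] inF_basic(3)[OF assms] by auto
  show "finv r f (f t) = t"
    unfolding finv_def using inv_into_f_f[OF bij_betw_imp_inj_on[OF bij]] inF_range[OF assms]
      inF_basic(3)[OF assms] by (cases "t \<in> {0..<r}") auto
  show "t \<in> {0..<r} \<Longrightarrow> finv r f t \<in> {0..<r}"
    unfolding finv_def using img inv_into_into[of t f "{0..<r}"] by auto
qed

lemma inF_bij: "inFF f \<Longrightarrow> bij f"
  by (rule bij_betw_byWitness[where f' = "finv r f"]) (auto simp: inF_finv)

lemma inF_image_Ioo:
  assumes f: "inFF f" and pq: "0 \<le> p" "p < q" "q < r"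
  shows "f ` {p<..<q} = {f p<..<f q}"
proof
  show "f ` {p<..<q} \<subseteq> {f p<..<f q}" using inF_zero_mono(2)[OF f] pq by auto
  show "{f p<..<f q} \<subseteq> f ` {p<..<q}"
  proof
    fix w assume w: "w \<in> {f p<..<f q}"
    then have wr: "w \<in> {0..<r}" using inF_range[OF f, of p] inF_range[OF f, of q] pq by auto
    define v where "v = finv r f w"
    have v: "v \<in> {0..<r}" "f v = w" unfolding v_def using inF_finv[OF f] wr by auto
    then have "p < v" "v < q" using inF_le_iff(2)[OF f, of p v] inF_le_iff(2)[OF f, of v q] pq w by auto
    then show "w \<in> f ` {p<..<q}" using v by auto
  qed
qed

text \<open>Maps in F preserve A: on the affine piece ending at u, the slope lies in Lam and the
  start point is 0 or a breakpoint, both mapped into A.\<close>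
lemma inF_A:
  assumes "inFF f" "u \<in> {0..<r}"
  shows "u \<in> A \<longleftrightarrow> f u \<in> A"
proof (cases "u = 0")
  case True then show ?thesis using inF_zero_mono(1)[OF assms(1)] by simp
next
  case False
  obtain B where B: "finite B" "B \<subseteq> A" "f ` B \<subseteq> A"
    "\<And>s t. 0 \<le> s \<Longrightarrow> s < t \<Longrightarrow> t < r \<Longrightarrow> {s<..<t} \<inter> B = {} \<Longrightarrow>
           \<exists>l\<in>Lam. \<exists>c. \<forall>u\<in>{s..t}. f u = l * u + c"
    using inF_brk[OF assms(1)] by metis
  have "0 < u" using False assms(2) by simp
  then obtain s where s: "0 \<le> s" "s < u" "s \<in> insert 0 B" "{s<..<u} \<inter> B = {}"
    by (rule finite_gap_below[OF B(1)])
  have sA: "s \<in> A" "f s \<in> A" using s(3) B(2,3) A0 inF_zero_mono(1)[OF assms(1)] by auto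
  obtain l c where lc: "l \<in> Lam" "\<forall>w\<in>{s..u}. f w = l * w + c"
    using B(4)[OF s(1,2) _ s(4)] assms(2) by auto
  have eq: "f u = f s + l * (u - s)" using lc(2) s(2) by (auto simp: algebra_simps)
  have "u = s + inverse l * (f u - f s)" using eq Lam_pos[OF lc(1)] by (simp add: field_simps)
  then show ?thesis using eq A_add[OF sA(1)] A_add[OF sA(2)] A_diff[OF _ sA(1)] A_diff[OF _ sA(2)]
      LamA[OF lc(1)] LamA[OF Lam_inv[OF lc(1)]] by metis
qed

lemma pw_cont:
  fixes g :: "real \<Rightarrow> real"
  assumes fin: "finite B"
    and aff: "\<And>s t. 0 \<le> s \<Longrightarrow> s < t \<Longrightarrow> t < r \<Longrightarrow> {s<..<t} \<inter> B = {} \<Longrightarrow>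
               \<exists>l\<in>Lam. \<exists>c. \<forall>u\<in>{s..t}. g u = l * u + c"
  shows "continuous_on {0..<r} g"
  unfolding continuous_on_iff
proof (intro ballI allI impI)
  fix u e :: real assume u: "u \<in> {0..<r}" and e: "e > 0"
  have "u < (u + r) / 2" using u by simp
  then obtain t where t: "u < t" "t \<le> (u + r) / 2" "{u<..<t} \<inter> B = {}"
    by (rule finite_gap_above[OF fin])
  have "\<exists>l\<in>Lam. \<exists>c. \<forall>w\<in>{u..t}. g w = l * w + c" by (rule aff) (use u t in auto)
  then obtain l2 c2 where l2: "l2 \<in> Lam" "\<forall>w\<in>{u..t}. g w = l2 * w + c2" by blast
  have l2p: "l2 > 0" using Lam_pos l2(1) by auto
  obtain s l1 c1 where s: "s < u" "l1 > 0" "\<forall>w\<in>{s..u}. 0 \<le> w \<longrightarrow> g w = l1 * w + c1"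
  proof (cases "u = 0")
    case True
    show ?thesis by (rule that[of "-1" 1 "g 0"]) (use True in auto)
  next
    case False
    then have "0 < u" using u by simp
    then obtain s where s: "0 \<le> s" "s < u" "s \<in> insert 0 B" "{s<..<u} \<inter> B = {}"
      by (rule finite_gap_below[OF fin])
    have "\<exists>l\<in>Lam. \<exists>c. \<forall>w\<in>{s..u}. g w = l * w + c" by (rule aff) (use s u in auto)
    then obtain l c where "l \<in> Lam" "\<forall>w\<in>{s..u}. g w = l * w + c" by blast
    then show ?thesis using that[of s l c] s(2) Lam_pos by blast
  qed
  define \<delta> where "\<delta> = min (t - u) (min (u - s) (min (e / l1) (e / l2)))"
  have \<delta>: "\<delta> \<le> t - u" "\<delta> \<le> u - s" "\<delta> \<le> e / l1" "\<delta> \<le> e / l2" unfolding \<delta>_def by auto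
  show "\<exists>\<delta>>0. \<forall>x'\<in>{0..<r}. dist x' u < \<delta> \<longrightarrow> dist (g x') (g u) < e"
  proof (intro exI conjI ballI impI)
    show "\<delta> > 0" unfolding \<delta>_def using t s e l2p by auto
    fix x' assume x': "x' \<in> {0..<r}" "dist x' u < \<delta>"
    then have xd: "\<bar>x' - u\<bar> < \<delta>" by (simp add: dist_real_def)
    obtain l c where lc: "l > 0" "\<bar>x' - u\<bar> < e / l" "g x' = l * x' + c" "g u = l * u + c"
    proof (cases "u \<le> x'")
      case True
      then have "x' \<in> {u..t}" "u \<in> {u..t}" using xd \<delta>(1) t(1) by auto
      then show ?thesis using that[of l2 c2] l2p l2(2) xd \<delta>(4) by auto
    next
      case False
      then have "x' \<in> {s..u}" "u \<in> {s..u}" using xd \<delta>(2) s(1) by auto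
      then show ?thesis using that[of l1 c1] s(2,3) xd \<delta>(3) x'(1) u by auto
    qed
    have "l * \<bar>x' - u\<bar> < e" using lc(1,2) by (simp add: field_simps)
    then show "dist (g x') (g u) < e" using lc by (simp add: dist_real_def abs_mult right_diff_distrib[symmetric])
  qed
qed

lemma inF_finv_pos: "inFF f \<Longrightarrow> t \<in> {0<..<r} \<Longrightarrow> finv r f t \<in> {0<..<r}"
  using inF_finv[of f t] inF_zero_mono(1)[of f] by (cases "finv r f t = 0") auto

lemma inF_id: "inFF id"
proof (rule inF_intro[of _ "{}"])
  show "\<exists>l\<in>Lam. \<exists>c. \<forall>u\<in>{s..t}. id u = l * u + c" for s t
    using one_Lam by (intro bexI[of _ 1] exI[of _ 0]) auto
qed (auto simp: bij_betw_id continuous_on_id)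

text \<open>The breakpoints of a composite are those of the first map together with the preimages
  of those of the second.\<close>
lemma inF_comp:
  assumes f: "inFF f" and g: "inFF g"
  shows "inFF (g \<circ> f)"
proof -
  obtain Bf where Bf: "finite Bf" "Bf \<subseteq> {0<..<r}" "Bf \<subseteq> A" "f ` Bf \<subseteq> A"
    "\<And>s t. 0 \<le> s \<Longrightarrow> s < t \<Longrightarrow> t < r \<Longrightarrow> {s<..<t} \<inter> Bf = {} \<Longrightarrow>
           \<exists>l\<in>Lam. \<exists>c. \<forall>u\<in>{s..t}. f u = l * u + c"
    using inF_brk[OF f] by metis
  obtain Bg where Bg: "finite Bg" "Bg \<subseteq> {0<..<r}" "Bg \<subseteq> A" "g ` Bg \<subseteq> A"
    "\<And>s t. 0 \<le> s \<Longrightarrow> s < t \<Longrightarrow> t < r \<Longrightarrow> {s<..<t} \<inter> Bg = {} \<Longrightarrow>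
           \<exists>l\<in>Lam. \<exists>c. \<forall>u\<in>{s..t}. g u = l * u + c"
    using inF_brk[OF g] by metis
  define B where "B = Bf \<union> finv r f ` Bg"
  have preB: "finv r f \<beta> \<in> {0<..<r}" "f (finv r f \<beta>) = \<beta>" if "\<beta> \<in> Bg" for \<beta>
    using inF_finv_pos[OF f] inF_finv(1)[OF f] Bg(2) that by auto
  have aff: "\<exists>l\<in>Lam. \<exists>c. \<forall>u\<in>{s..t}. (g \<circ> f) u = l * u + c"
    if st: "0 \<le> s" "s < t" "t < r" "{s<..<t} \<inter> B = {}" for s t
  proof -
    have "\<exists>l\<in>Lam. \<exists>c. \<forall>u\<in>{s..t}. f u = l * u + c" by (rule Bf(5)) (use st in \<open>auto simp: B_def\<close>)
    then obtain l1 c1 where l1: "l1 \<in> Lam" "\<forall>w\<in>{s..t}. f w = l1 * w + c1" by blast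
    have fst: "0 \<le> f s" "f s < f t" "f t < r"
      using inF_zero_mono(2)[OF f] inF_range[OF f, of s] inF_range[OF f, of t] st by auto
    have "{f s<..<f t} \<inter> Bg = {}"
    proof -
      have "f v \<notin> Bg" if "v \<in> {s<..<t}" for v
        using that st(4) inF_finv(2)[OF f, of v] unfolding B_def by (metis IntI empty_iff image_eqI UnCI)
      then show ?thesis unfolding inF_image_Ioo[OF f st(1-3), symmetric] by blast
    qed
    then have "\<exists>l\<in>Lam. \<exists>c. \<forall>u\<in>{f s..f t}. g u = l * u + c" by (rule Bg(5)[OF fst])
    then obtain l2 c2 where l2: "l2 \<in> Lam" "\<forall>w\<in>{f s..f t}. g w = l2 * w + c2" by blast
    have "f w \<in> {f s..f t}" if "w \<in> {s..t}" for w
      using inF_le_iff(1)[OF f, of s w] inF_le_iff(1)[OF f, of w t] that st by auto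
    then have "\<forall>w\<in>{s..t}. (g \<circ> f) w = (l2 * l1) * w + (l2 * c1 + c2)"
      using l1(2) l2(2) by (simp add: algebra_simps)
    then show ?thesis using Lam_mult[OF l2(1) l1(1)] by blast
  qed
  show ?thesis
  proof (rule inF_intro[OF _ _ _ _ _ _ _ aff])
    show "bij_betw (g \<circ> f) {0..<r} {0..<r}"
      by (rule bij_betw_trans[OF inF_basic(1)[OF f] inF_basic(1)[OF g]])
    show "continuous_on {0..<r} (g \<circ> f)"
      by (rule continuous_on_compose[OF inF_basic(2)[OF f]])
        (use inF_basic(2)[OF g] bij_betw_imp_surj_on[OF inF_basic(1)[OF f]] in simp)
    show "(g \<circ> f) t = t" if "t \<notin> {0..<r}" for t using inF_basic(3)[OF f that] inF_basic(3)[OF g that] by simp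
    show "finite B" unfolding B_def using Bf(1) Bg(1) by auto
    show "B \<subseteq> {0<..<r}" unfolding B_def using Bf(2) preB by auto
    have "finv r f \<beta> \<in> A" if "\<beta> \<in> Bg" for \<beta>
      using inF_A[OF f, of "finv r f \<beta>"] preB[OF that] Bg(3) that by auto
    then show "B \<subseteq> A" unfolding B_def using Bf(3) by auto
    have "g (f v) \<in> A" if "v \<in> Bf" for v
    proof -
      have "v \<in> {0..<r}" "f v \<in> A" using Bf(2,4) that by auto
      then show ?thesis using inF_A[OF g, of "f v"] inF_range[OF f, of v] by blast
    qed
    then show "(g \<circ> f) ` B \<subseteq> A" unfolding B_def using preB Bg(4) by auto
  qed auto
qed

text \<open>The inverse of a map in F is in F, its breakpoints being the images of the original ones.\<close>
lemma inF_finv_in: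
  assumes f: "inFF f"
  shows "inFF (finv r f)"
proof -
  obtain Bf where Bf: "finite Bf" "Bf \<subseteq> {0<..<r}" "Bf \<subseteq> A" "f ` Bf \<subseteq> A"
    "\<And>s t. 0 \<le> s \<Longrightarrow> s < t \<Longrightarrow> t < r \<Longrightarrow> {s<..<t} \<inter> Bf = {} \<Longrightarrow>
           \<exists>l\<in>Lam. \<exists>c. \<forall>u\<in>{s..t}. f u = l * u + c"
    using inF_brk[OF f] by metis
  define h where "h = finv r f"
  have hf: "h (f t) = t" "f (h t) = t" for t unfolding h_def using inF_finv[OF f] by auto
  have hr: "t \<in> {0..<r} \<Longrightarrow> h t \<in> {0..<r}" for t unfolding h_def using inF_finv(3)[OF f] by auto
  have aff: "\<exists>l\<in>Lam. \<exists>c. \<forall>u\<in>{s..t}. h u = l * u + c"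
    if st: "0 \<le> s" "s < t" "t < r" "{s<..<t} \<inter> f ` Bf = {}" for s t
  proof -
    have hst: "0 \<le> h s" "h s < h t" "h t < r"
      using hr[of s] hr[of t] inF_le_iff(2)[OF f, of "h s" "h t"] st hf by auto
    have "{h s<..<h t} \<inter> Bf = {}"
    proof -
      have "f ` {h s<..<h t} = {s<..<t}" using inF_image_Ioo[OF f hst] hf by simp
      then show ?thesis using st(4) by blast
    qed
    then have "\<exists>l\<in>Lam. \<exists>c. \<forall>u\<in>{h s..h t}. f u = l * u + c" by (rule Bf(5)[OF hst])
    then obtain l c where lc: "l \<in> Lam" "\<forall>w\<in>{h s..h t}. f w = l * w + c" by blast
    have "h w = inverse l * w + - c / l" if w: "w \<in> {s..t}" for w
    proof -
      have "h w \<in> {h s..h t}"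
        using inF_le_iff(1)[OF f, of "h s" "h w"] inF_le_iff(1)[OF f, of "h w" "h t"] hr[of w] hst w st hf
        by auto
      then have "w = l * h w + c" using lc(2) hf[of w] by metis
      then show ?thesis using Lam_pos[OF lc(1)] by (simp add: field_simps)
    qed
    then show ?thesis using Lam_inv[OF lc(1)] by blast
  qed
  have fB: "finite (f ` Bf)" using Bf(1) by auto
  show ?thesis unfolding h_def[symmetric]
  proof (rule inF_intro[OF _ _ _ fB _ _ _ aff])
    show "bij_betw h {0..<r} {0..<r}"
      by (rule bij_betw_byWitness[where f' = f]) (use hf hr inF_range[OF f] in auto)
    show "continuous_on {0..<r} h" by (rule pw_cont[OF fB aff])
    show "h t = t" if "t \<notin> {0..<r}" for t using that unfolding h_def finv_def by auto
    show "f ` Bf \<subseteq> {0<..<r}" using Bf(2) inF_pos[OF f] by auto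
    show "f ` Bf \<subseteq> A" by (rule Bf(4))
    show "h ` f ` Bf \<subseteq> A" using Bf(3) hf by auto
  qed
qed

lemma Fgrp_carrier: "carrier GG = {f. inFF f}"
  unfolding Fgrp_def Fset_def by simp

lemma Fgrp_mult: "x \<otimes>\<^bsub>GG\<^esub> y = y \<circ> x"
  unfolding Fgrp_def by simp

lemma Fgrp_one: "\<one>\<^bsub>GG\<^esub> = id"
  unfolding Fgrp_def by simp

lemma Fgrp_group: "group GG"
proof (rule groupI)
  show "x \<otimes>\<^bsub>GG\<^esub> y \<in> carrier GG" if "x \<in> carrier GG" "y \<in> carrier GG" for x y
    using that inF_comp unfolding Fgrp_carrier Fgrp_mult by auto
  show "\<one>\<^bsub>GG\<^esub> \<in> carrier GG" using inF_id unfolding Fgrp_carrier Fgrp_one by auto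
  show "x \<otimes>\<^bsub>GG\<^esub> y \<otimes>\<^bsub>GG\<^esub> z = x \<otimes>\<^bsub>GG\<^esub> (y \<otimes>\<^bsub>GG\<^esub> z)" for x y z
    unfolding Fgrp_mult by (simp add: comp_assoc)
  show "\<one>\<^bsub>GG\<^esub> \<otimes>\<^bsub>GG\<^esub> x = x" for x unfolding Fgrp_mult Fgrp_one by simp
  show "\<exists>y\<in>carrier GG. y \<otimes>\<^bsub>GG\<^esub> x = \<one>\<^bsub>GG\<^esub>" if "x \<in> carrier GG" for x
  proof
    have "inFF x" using that unfolding Fgrp_carrier by auto
    then show "finv r x \<otimes>\<^bsub>GG\<^esub> x = \<one>\<^bsub>GG\<^esub>" "finv r x \<in> carrier GG"
      using inF_finv(1) inF_finv_in unfolding Fgrp_mult Fgrp_one Fgrp_carrier by (auto simp: fun_eq_iff)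
  qed
qed

lemma Fgrp_inv: "x \<in> carrier GG \<Longrightarrow> inv\<^bsub>GG\<^esub> x = finv r x"
  using group.inv_equality[OF Fgrp_group, of "finv r x" x] inF_finv(1)[of x] inF_finv_in[of x]
  unfolding Fgrp_carrier Fgrp_mult Fgrp_one by (auto simp: fun_eq_iff)

text \<open>Cutting a map in F down to an interval [p,q] whose endpoints lie in A and are fixed gives
  again a map in F, with breakpoints those inside (p,q) together with p and q.\<close>
lemma inF_restr:
  assumes x: "inFF x" and pq: "0 < p" "p < q" "q < r" "p \<in> A" "q \<in> A" "x p = p" "x q = q"
  shows "inFF (restr p q x)"
proof -
  obtain Bx where Bx: "finite Bx" "Bx \<subseteq> A" "x ` Bx \<subseteq> A"
    "\<And>s t. 0 \<le> s \<Longrightarrow> s < t \<Longrightarrow> t < r \<Longrightarrow> {s<..<t} \<inter> Bx = {} \<Longrightarrow>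
           \<exists>l\<in>Lam. \<exists>c. \<forall>u\<in>{s..t}. x u = l * u + c"
    using inF_brk[OF x] by metis
  define y where "y = restr p q x"
  have x_pq: "x t \<in> {p..q}" if "t \<in> {p..q}" for t
    using inF_le_iff(1)[OF x, of p t] inF_le_iff(1)[OF x, of t q] that pq by auto
  have finv_pq: "finv r x t \<in> {p..q}" if "t \<in> {p..q}" for t
    using inF_le_iff(1)[OF x, of p "finv r x t"] inF_le_iff(1)[OF x, of "finv r x t" q]
      inF_finv(1,3)[OF x, of t] that pq by auto
  define B where "B = (Bx \<inter> {p<..<q}) \<union> {p, q}"
  have aff: "\<exists>l\<in>Lam. \<exists>c. \<forall>u\<in>{s..t}. y u = l * u + c"
    if st: "0 \<le> s" "s < t" "t < r" "{s<..<t} \<inter> B = {}" for s t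
  proof (cases "p \<le> s \<and> t \<le> q")
    case True
    then have "{s<..<t} \<inter> Bx = {}" using st(4) unfolding B_def by auto
    then obtain l c where lc: "l \<in> Lam" "\<forall>u\<in>{s..t}. x u = l * u + c" using Bx(4)[OF st(1-3)] by blast
    have "\<forall>u\<in>{s..t}. y u = l * u + c" using lc(2) True unfolding y_def restr_def by auto
    then show ?thesis using lc(1) by blast
  next
    case False
    then have "t \<le> p \<or> q \<le> s" using st(2,4) unfolding B_def by auto
    then have "u \<in> {p..q} \<Longrightarrow> u = p \<or> u = q" if "u \<in> {s..t}" for u using that by auto
    then have "y u = 1 * u + 0" if "u \<in> {s..t}" for u
      using that pq unfolding y_def restr_def by (cases "u \<in> {p..q}") auto
    then show ?thesis using one_Lam by blast
  qed
  have fB: "finite B" unfolding B_def using Bx(1) by auto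
  show ?thesis unfolding y_def[symmetric]
  proof (rule inF_intro[OF _ _ _ fB _ _ _ aff])
    show "bij_betw y {0..<r} {0..<r}"
    proof (rule bij_betw_byWitness[where f' = "restr p q (finv r x)"])
      show "\<forall>a\<in>{0..<r}. restr p q (finv r x) (y a) = a"
        using x_pq inF_finv(2)[OF x] unfolding y_def restr_def by auto
      show "\<forall>a\<in>{0..<r}. y (restr p q (finv r x) a) = a"
        using finv_pq inF_finv(1)[OF x] unfolding y_def restr_def by auto
      show "y ` {0..<r} \<subseteq> {0..<r}" using inF_range[OF x] unfolding y_def restr_def by auto
      show "restr p q (finv r x) ` {0..<r} \<subseteq> {0..<r}"
        using inF_finv(3)[OF x] unfolding restr_def by auto
    qed
    show "continuous_on {0..<r} y" by (rule pw_cont[OF fB aff])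
    show "y t = t" if "t \<notin> {0..<r}" for t using that pq unfolding y_def restr_def by auto
    show "B \<subseteq> {0<..<r}" "B \<subseteq> A" unfolding B_def using Bx(2) pq by auto
    show "y ` B \<subseteq> A" unfolding B_def y_def restr_def using Bx(3) pq by auto
  qed
qed

lemma inF_covering_left_end:
  assumes x: "inFF x" and pq: "0 \<le> p" "p < q" "q < r" and cover: "{p<..<q} \<subseteq> x ` {p<..<q}"
  shows "x p \<le> p"
proof (rule ccontr)
  assume "\<not> x p \<le> p"
  define m where "m = (p + min (x p) q) / 2"
  have m: "m \<in> {p<..<q}" "m < x p" using \<open>\<not> x p \<le> p\<close> pq unfolding m_def by auto
  then obtain v where v: "v \<in> {p<..<q}" "x v = m" using cover by auto
  then have "x p < x v" using inF_zero_mono(2)[OF x, of p v] pq by auto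
  then show False using m(2) v(2) by simp
qed

lemma inF_fixes_endpoint:
  assumes x: "inFF x" and pq: "0 \<le> p" "p < q" "q < r" and onto: "x ` {p<..<q} = {p<..<q}"
  shows "x p = p"
proof -
  have "x p \<le> p" by (rule inF_covering_left_end[OF x pq]) (use onto in simp)
  have "finv r x ` {p<..<q} = finv r x ` x ` {p<..<q}" using onto by simp
  also have "\<dots> = {p<..<q}" using inF_finv(2)[OF x] by (simp add: image_image)
  finally have "finv r x p \<le> p" by (intro inF_covering_left_end[OF inF_finv_in[OF x] pq]) simp
  then have "p \<le> x p"
    using inF_le_iff(1)[OF x, of "finv r x p" p] inF_finv(1,3)[OF x, of p] pq by auto
  then show ?thesis using \<open>x p \<le> p\<close> by simp
qed

text \<open>Between two fixed points that are not separated by a breakpoint, a map in F is affine and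
  hence the identity; so a map in F can move points only near finitely many breakpoints.\<close>
lemma inF_trivial_between_fixed_points:
  assumes x: "inFF x"
  obtains B where "finite B"
    "\<And>p q t. 0 \<le> p \<Longrightarrow> p < q \<Longrightarrow> q < r \<Longrightarrow> x p = p \<Longrightarrow> x q = q \<Longrightarrow> {p<..<q} \<inter> B = {} \<Longrightarrow>
       t \<in> {p..q} \<Longrightarrow> x t = t"
proof -
  obtain B where B: "finite B"
    "\<And>s t. 0 \<le> s \<Longrightarrow> s < t \<Longrightarrow> t < r \<Longrightarrow> {s<..<t} \<inter> B = {} \<Longrightarrow>
           \<exists>l\<in>Lam. \<exists>c. \<forall>u\<in>{s..t}. x u = l * u + c"
    using inF_brk[OF x] by metis
  have "x t = t" if pq: "0 \<le> p" "p < q" "q < r" "x p = p" "x q = q" "{p<..<q} \<inter> B = {}"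
    and t: "t \<in> {p..q}" for p q t
  proof -
    obtain l c where lc: "\<forall>u\<in>{p..q}. x u = l * u + c" using B(2)[OF pq(1-3,6)] by blast
    have "l * p + c = p" "l * q + c = q" using lc pq(2,4,5) by auto
    then have "(l - 1) * (q - p) = 0" by (simp add: algebra_simps)
    then have "l = 1" "c = 0" using pq(2) \<open>l * p + c = p\<close> by auto
    then show ?thesis using lc t by simp
  qed
  then show ?thesis using that B(1) by blast
qed

end

sublocale Fctx \<subseteq> G: group "Fgrp r Lam A" by (rule Fgrp_group)

locale translates = Fctx +
  fixes a b d :: "real \<Rightarrow> real" and \<alpha>0 :: real
  assumes a_up: "a \<in> Fup r Lam A" and a_supp: "supp a = {0<..<r}"
    and al0: "\<alpha>0 \<in> {0<..<r} \<inter> A"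
    and b_up: "b \<in> Fup r Lam A"
    and b_supp: "supp b = {\<alpha>0<..<a \<alpha>0}"
    and d_gen: "d \<in> centralizer_in GG (Fsupp r Lam A {\<alpha>0<..<a \<alpha>0}) {b}"
    and d_generates: "generate GG {d} = centralizer_in GG (Fsupp r Lam A {\<alpha>0<..<a \<alpha>0}) {b}"
begin

definition apow :: "int \<Rightarrow> real \<Rightarrow> real" where
  "apow k = a [^]\<^bsub>GG\<^esub> k"

definition \<alpha> :: "int \<Rightarrow> real" where
  "\<alpha> k = apow k \<alpha>0"

definition I :: "int \<Rightarrow> real set" where
  "I k = {\<alpha> k<..<\<alpha> (k + 1)}"

definition bconj :: "int \<Rightarrow> real \<Rightarrow> real" where
  "bconj k = inv\<^bsub>GG\<^esub> (apow k) \<otimes>\<^bsub>GG\<^esub> b \<otimes>\<^bsub>GG\<^esub> apow k"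

definition dconj :: "int \<Rightarrow> real \<Rightarrow> real" where
  "dconj k = inv\<^bsub>GG\<^esub> (apow k) \<otimes>\<^bsub>GG\<^esub> d \<otimes>\<^bsub>GG\<^esub> apow k"

definition Cen :: "(real \<Rightarrow> real) set" where
  "Cen = centralizer_in GG (carrier GG) (range bconj)"

lemma carrier_iff: "f \<in> carrier GG \<longleftrightarrow> inFF f"
  by (simp add: Fgrp_carrier)

lemma carrier_inj: "f \<in> carrier GG \<Longrightarrow> inj f"
  using inF_bij bij_is_inj carrier_iff by blast

lemma a_in: "inFF a" "a \<in> carrier GG" and b_in: "b \<in> carrier GG"
  using a_up b_up unfolding Fup_def Fset_def carrier_iff by auto

lemma d_in: "d \<in> carrier GG" and d_supp: "supp d \<subseteq> {\<alpha>0<..<a \<alpha>0}"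
  and d_comm: "d \<otimes>\<^bsub>GG\<^esub> b = b \<otimes>\<^bsub>GG\<^esub> d"
  using d_gen unfolding centralizer_in_def Fsupp_def Fset_def carrier_iff by auto

lemma a_moves: "t \<in> {0<..<r} \<Longrightarrow> t < a t"
proof -
  assume t: "t \<in> {0<..<r}"
  then have "t \<le> a t" using a_up unfolding Fup_def by auto
  moreover have "a t \<noteq> t" using t a_supp unfolding supp_def by blast
  ultimately show ?thesis by simp
qed

lemma apow_in: "apow k \<in> carrier GG" "inFF (apow k)"
  unfolding apow_def using a_in carrier_iff by auto

lemma apow_succ: "apow (k + 1) = a \<circ> apow k" "apow k \<circ> a = apow (k + 1)"
  using G.int_pow_mult[OF a_in(2), of k 1] G.int_pow_mult[OF a_in(2), of 1 k] a_in(2)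
  unfolding apow_def by (simp_all add: Fgrp_mult add.commute)

lemma \<alpha>_succ: "\<alpha> (k + 1) = a (\<alpha> k)"
  unfolding \<alpha>_def apow_succ by simp

lemma \<alpha>_pos: "\<alpha> k \<in> {0<..<r}" and \<alpha>_A: "\<alpha> k \<in> A"
  unfolding \<alpha>_def using inF_pos[OF apow_in(2)] inF_A[OF apow_in(2), of \<alpha>0] al0 by auto

lemma a_cont: "continuous_on {0<..<r} a"
  by (rule continuous_on_subset[OF inF_basic(2)[OF a_in(1)]]) auto

lemma \<alpha>_mono: "strict_mono \<alpha>"
  by (rule orbit_strict_mono[where f = a and x = \<alpha> and r = r, OF a_cont a_moves \<alpha>_pos \<alpha>_succ])

lemma \<alpha>_cover:
  assumes "t \<in> {0<..<r}"
  obtains k where "\<alpha> k \<le> t" "t < \<alpha> (k + 1)"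
  using orbit_exhausts[where f = a and x = \<alpha> and r = r, OF a_cont a_moves \<alpha>_pos \<alpha>_succ assms] that by blast

lemma \<alpha>_interval: "0 < \<alpha> k" "\<alpha> k < \<alpha> (k + 1)" "\<alpha> (k + 1) < r"
  using \<alpha>_pos[of k] \<alpha>_pos[of "k + 1"] strict_monoD[OF \<alpha>_mono, of k "k + 1"] by auto

lemma I_disjoint: "j \<noteq> k \<Longrightarrow> t \<in> I j \<Longrightarrow> t \<notin> {\<alpha> k..\<alpha> (k + 1)}"
  using strict_mono_less_eq[OF \<alpha>_mono, of "j + 1" k] strict_mono_less_eq[OF \<alpha>_mono, of "k + 1" j]
  unfolding I_def by (cases "j < k") auto

lemma apow_image: "apow k ` {\<alpha>0<..<a \<alpha>0} = I k"
proof -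
  have "a \<alpha>0 < r" "\<alpha>0 < a \<alpha>0" using inF_pos[OF a_in(1)] a_moves al0 by auto
  then show ?thesis
    using inF_image_Ioo[OF apow_in(2)[of k], of \<alpha>0 "a \<alpha>0"] al0 fun_cong[OF apow_succ(2)[of k], of \<alpha>0]
    unfolding I_def \<alpha>_def by simp
qed

lemma conj_fun:
  assumes "y \<in> carrier GG"
  shows "inv\<^bsub>GG\<^esub> (apow k) \<otimes>\<^bsub>GG\<^esub> y \<otimes>\<^bsub>GG\<^esub> apow k = apow k \<circ> y \<circ> finv r (apow k)"
  using Fgrp_inv[OF apow_in(1)] by (simp add: Fgrp_mult comp_assoc)

lemma supp_conj_apow: "supp (apow k \<circ> y \<circ> finv r (apow k)) = apow k ` supp y"
  by (rule supp_conjugate[OF inF_finv(1,2)[OF apow_in(2)]])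

lemma bconj_in: "bconj k \<in> carrier GG" and dconj_in: "dconj k \<in> carrier GG"
  unfolding bconj_def dconj_def using apow_in(1) b_in d_in by auto

lemma supp_bconj: "supp (bconj k) = I k"
  unfolding bconj_def conj_fun[OF b_in] supp_conj_apow b_supp apow_image ..

lemma supp_dconj: "supp (dconj k) \<subseteq> I k"
  unfolding dconj_def conj_fun[OF d_in] supp_conj_apow apow_image[symmetric] using d_supp by blast

definition piece :: "(real \<Rightarrow> real) \<Rightarrow> int \<Rightarrow> real \<Rightarrow> real" where
  "piece x k = restr (\<alpha> k) (\<alpha> (k + 1)) x"

definition moving :: "(real \<Rightarrow> real) \<Rightarrow> int set" where
  "moving x = {k. I k \<inter> supp x \<noteq> {}}"

lemma Cen_subgroup: "subgroup Cen GG"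
  unfolding Cen_def by (rule G.centralizer_subgroup) (use bconj_in in auto)

lemma CenD:
  assumes "x \<in> Cen"
  shows "x \<in> carrier GG" "inFF x" "x \<circ> bconj k = bconj k \<circ> x"
  using assms unfolding Cen_def centralizer_in_def carrier_iff Fgrp_mult by auto

text \<open>Each translate of d commutes with its own translate of b, and with all the others because
  their supports are disjoint.\<close>
lemma dconj_in_Cen: "dconj k \<in> Cen"
  unfolding Cen_def centralizer_in_def
proof (intro CollectI conjI ballI)
  show "dconj k \<in> carrier GG" by (rule dconj_in)
  fix y assume "y \<in> range bconj"
  then obtain j where y: "y = bconj j" by auto
  show "dconj k \<otimes>\<^bsub>GG\<^esub> y = y \<otimes>\<^bsub>GG\<^esub> dconj k"
  proof (cases "j = k")
    case True
    show ?thesis unfolding y True dconj_def bconj_def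
      by (rule G.conj_commute[OF apow_in(1) d_in b_in d_comm])
  next
    case False
    have "supp (dconj k) \<inter> supp (bconj j) = {}"
      using supp_dconj[of k] supp_bconj[of j] I_disjoint[OF False] unfolding I_def by fastforce
    then have "dconj k \<circ> bconj j = bconj j \<circ> dconj k"
      by (rule disjoint_supp_commute[OF carrier_inj[OF dconj_in] carrier_inj[OF bconj_in]])
    then show ?thesis unfolding y Fgrp_mult by simp
  qed
qed

lemma generate_dconj_sub_Cen: "generate GG (range dconj) \<subseteq> Cen"
  by (rule G.generate_subgroup_incl[OF _ Cen_subgroup]) (use dconj_in_Cen in auto)

text \<open>An element of the centralizer permutes the support I k of bconj k, hence fixes its
  endpoints: all points \<alpha> k are fixed.\<close>
lemma Cen_fixes_\<alpha>:
  assumes "x \<in> Cen"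
  shows "x (\<alpha> k) = \<alpha> k"
proof (rule inF_fixes_endpoint[OF CenD(2)[OF assms]])
  show "0 \<le> \<alpha> k" "\<alpha> k < \<alpha> (k + 1)" "\<alpha> (k + 1) < r" using \<alpha>_interval[of k] by auto
  show "x ` {\<alpha> k<..<\<alpha> (k + 1)} = {\<alpha> k<..<\<alpha> (k + 1)}"
    using commuting_bij_preserves_supp[OF inF_bij[OF CenD(2)[OF assms]] CenD(3)[OF assms]]
    unfolding supp_bconj I_def .
qed

lemma piece_in:
  assumes "x \<in> Cen"
  shows "inFF (piece x k)" "piece x k \<in> carrier GG"
proof -
  show "inFF (piece x k)" unfolding piece_def
    by (rule inF_restr[OF CenD(2)[OF assms] \<alpha>_interval \<alpha>_A \<alpha>_A Cen_fixes_\<alpha>[OF assms] Cen_fixes_\<alpha>[OF assms]])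
  then show "piece x k \<in> carrier GG" by (simp add: carrier_iff)
qed

lemma piece_on: "t \<in> {\<alpha> k..\<alpha> (k + 1)} \<Longrightarrow> piece x k t = x t"
  and piece_off: "t \<notin> {\<alpha> k..\<alpha> (k + 1)} \<Longrightarrow> piece x k t = t"
  unfolding piece_def restr_def by auto

lemma supp_piece:
  assumes "x \<in> Cen"
  shows "supp (piece x k) \<subseteq> I k"
proof
  fix t assume "t \<in> supp (piece x k)"
  then have moved: "piece x k t \<noteq> t" unfolding supp_def by simp
  then have "t \<in> {\<alpha> k..\<alpha> (k + 1)}" using piece_off by blast
  moreover have "t \<noteq> \<alpha> k" "t \<noteq> \<alpha> (k + 1)"
    using moved piece_on[of _ k x] Cen_fixes_\<alpha>[OF assms] \<alpha>_interval[of k] by auto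
  ultimately show "t \<in> I k" unfolding I_def by auto
qed

text \<open>The piece of x on the k-th tile commutes with bconj k, so conjugated back by the k-th power
  of a it lies in the centralizer of b in F_(\<alpha>0, (\<alpha>0)a), which is generated by d.\<close>
lemma piece_untranslated:
  assumes x: "x \<in> Cen"
  shows "apow k \<otimes>\<^bsub>GG\<^esub> piece x k \<otimes>\<^bsub>GG\<^esub> inv\<^bsub>GG\<^esub> apow k \<in> generate GG {d}"
proof -
  let ?c = "apow k" and ?y = "piece x k"
  define z where "z = ?c \<otimes>\<^bsub>GG\<^esub> ?y \<otimes>\<^bsub>GG\<^esub> inv\<^bsub>GG\<^esub> ?c"
  have c: "?c \<in> carrier GG" "inFF ?c" by (rule apow_in)+
  have "?y \<circ> bconj k = bconj k \<circ> ?y" unfolding piece_def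
    by (rule restr_commute[OF CenD(3)[OF x] carrier_inj[OF bconj_in]])
      (use supp_bconj[of k] in \<open>auto simp: I_def\<close>)
  then have comm: "?y \<otimes>\<^bsub>GG\<^esub> bconj k = bconj k \<otimes>\<^bsub>GG\<^esub> ?y" unfolding Fgrp_mult by simp
  have "z \<otimes>\<^bsub>GG\<^esub> (?c \<otimes>\<^bsub>GG\<^esub> bconj k \<otimes>\<^bsub>GG\<^esub> inv\<^bsub>GG\<^esub> ?c) =
        (?c \<otimes>\<^bsub>GG\<^esub> bconj k \<otimes>\<^bsub>GG\<^esub> inv\<^bsub>GG\<^esub> ?c) \<otimes>\<^bsub>GG\<^esub> z"
    using G.conj_commute[OF G.inv_closed[OF c(1)] piece_in(2)[OF x] bconj_in comm] c(1)
    unfolding z_def by simp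
  moreover have "?c \<otimes>\<^bsub>GG\<^esub> bconj k \<otimes>\<^bsub>GG\<^esub> inv\<^bsub>GG\<^esub> ?c = b"
    unfolding bconj_def by (rule G.conj_cancel(2)[OF c(1) b_in])
  ultimately have "z \<otimes>\<^bsub>GG\<^esub> b = b \<otimes>\<^bsub>GG\<^esub> z" by simp
  moreover have "supp z \<subseteq> {\<alpha>0<..<a \<alpha>0}"
  proof -
    have "z = finv r ?c \<circ> ?y \<circ> ?c"
      unfolding z_def using Fgrp_inv[OF c(1)] by (simp add: Fgrp_mult comp_assoc)
    then have "supp z = finv r ?c ` supp ?y"
      using supp_conjugate[OF inF_finv(2,1)[OF c(2)]] by simp
    also have "\<dots> \<subseteq> finv r ?c ` ?c ` {\<alpha>0<..<a \<alpha>0}" using supp_piece[OF x] apow_image by auto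
    finally show ?thesis using inF_finv(2)[OF c(2)] by (simp add: image_image)
  qed
  moreover have "z \<in> carrier GG" unfolding z_def using c(1) piece_in(2)[OF x] by simp
  ultimately have "z \<in> generate GG {d}"
    unfolding d_generates centralizer_in_def Fsupp_def by (simp add: Fgrp_carrier Fset_def)
  then show ?thesis unfolding z_def .
qed

lemma piece_generated:
  assumes x: "x \<in> Cen"
  shows "piece x k \<in> generate GG (range dconj)"
proof -
  let ?conj = "\<lambda>w. inv\<^bsub>GG\<^esub> (apow k) \<otimes>\<^bsub>GG\<^esub> w \<otimes>\<^bsub>GG\<^esub> apow k"
  have "?conj (apow k \<otimes>\<^bsub>GG\<^esub> piece x k \<otimes>\<^bsub>GG\<^esub> inv\<^bsub>GG\<^esub> apow k) \<in> ?conj ` generate GG {d}"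
    using piece_untranslated[OF x] by (rule imageI)
  also have "\<dots> = generate GG (?conj ` {d})" by (rule G.conj_generate[OF apow_in(1)]) (use d_in in simp)
  also have "\<dots> \<subseteq> generate GG (range dconj)" by (rule G.mono_generate) (auto simp: dconj_def)
  finally show ?thesis unfolding G.conj_cancel(1)[OF apow_in(1) piece_in(2)[OF x]] .
qed

text \<open>Only finitely many tiles contain a breakpoint, and an element of the centralizer, fixing
  all \<alpha> k, is the identity on every other tile.\<close>
lemma moving_finite:
  assumes x: "x \<in> Cen"
  shows "finite (moving x)"
proof -
  obtain B where B: "finite B"
    "\<And>p q t. 0 \<le> p \<Longrightarrow> p < q \<Longrightarrow> q < r \<Longrightarrow> x p = p \<Longrightarrow> x q = q \<Longrightarrow> {p<..<q} \<inter> B = {} \<Longrightarrow>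
       t \<in> {p..q} \<Longrightarrow> x t = t"
    using inF_trivial_between_fixed_points[OF CenD(2)[OF x]] by metis
  have "moving x \<subseteq> (\<Union>\<beta>\<in>B. {k. \<beta> \<in> I k})"
  proof
    fix k assume "k \<in> moving x"
    then obtain t where t: "t \<in> I k" "x t \<noteq> t" unfolding moving_def supp_def by auto
    have "I k \<inter> B \<noteq> {}"
    proof
      assume "I k \<inter> B = {}"
      then have "x t = t"
        using B(2)[of "\<alpha> k" "\<alpha> (k + 1)" t] \<alpha>_interval[of k] Cen_fixes_\<alpha>[OF x] t(1)
        unfolding I_def by auto
      then show False using t(2) by simp
    qed
    then show "k \<in> (\<Union>\<beta>\<in>B. {k. \<beta> \<in> I k})" by auto
  qed
  moreover have "finite {k. \<beta> \<in> I k}" for \<beta>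
  proof (cases "\<exists>j. \<beta> \<in> I j")
    case True
    then obtain j where "\<beta> \<in> I j" by blast
    then have "{k. \<beta> \<in> I k} \<subseteq> {j}" using I_disjoint unfolding I_def by fastforce
    then show ?thesis by (rule finite_subset) simp
  qed simp
  ultimately show ?thesis using B(1) by (meson finite_UN_I finite_subset)
qed

text \<open>An element of the centralizer acting trivially on every tile is the identity, since the
  points \<alpha> k are fixed and the tiles cover (0,r).\<close>
lemma Cen_trivial:
  assumes x: "x \<in> Cen" and "moving x = {}"
  shows "x = id"
proof
  fix t
  show "x t = id t"
  proof (cases "t \<in> {0<..<r}")
    case True
    then obtain k where k: "\<alpha> k \<le> t" "t < \<alpha> (k + 1)" by (rule \<alpha>_cover)
    show ?thesis
    proof (cases "t = \<alpha> k")
      case False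
      then have "t \<in> I k" using k unfolding I_def by auto
      then show ?thesis using assms(2) unfolding moving_def supp_def by auto
    qed (simp add: Cen_fixes_\<alpha>[OF x])
  next
    case False
    then have "t = 0 \<or> t \<notin> {0..<r}" by auto
    then show ?thesis using inF_zero_mono(1) inF_basic(3) CenD(2)[OF x] by auto
  qed
qed

lemma moving_remove_piece:
  assumes x: "x \<in> Cen"
  shows "moving (x \<otimes>\<^bsub>GG\<^esub> inv\<^bsub>GG\<^esub> piece x k) \<subseteq> moving x - {k}"
proof
  fix j assume "j \<in> moving (x \<otimes>\<^bsub>GG\<^esub> inv\<^bsub>GG\<^esub> piece x k)"
  then obtain t where t: "t \<in> I j" "finv r (piece x k) (x t) \<noteq> t"
    unfolding moving_def supp_def Fgrp_inv[OF piece_in(2)[OF x]] Fgrp_mult by auto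
  have finv_piece: "finv r (piece x k) (piece x k s) = s" for s by (rule inF_finv(2)[OF piece_in(1)[OF x]])
  show "j \<in> moving x - {k}"
  proof (cases "j = k")
    case True
    then have "piece x k t = x t" using t(1) piece_on unfolding I_def by auto
    then show ?thesis using t(2) finv_piece[of t] by simp
  next
    case False
    then have "piece x k t = t" using t(1) I_disjoint piece_off by blast
    then have "x t \<noteq> t" using t(2) finv_piece[of t] by auto
    then show ?thesis using t(1) False unfolding moving_def supp_def by auto
  qed
qed

text \<open>Induction over a finite set containing the moving tiles: peel off one piece at a time.\<close>
lemma Cen_generated_aux:
  assumes "finite S"
  shows "x \<in> Cen \<Longrightarrow> moving x \<subseteq> S \<Longrightarrow> x \<in> generate GG (range dconj)"
  using assms
proof (induction S arbitrary: x rule: finite_induct)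
  case empty
  then have "x = \<one>\<^bsub>GG\<^esub>" using Cen_trivial Fgrp_one by auto
  then show ?case by (simp add: generate.one)
next
  case (insert k S)
  define y where "y = piece x k"
  have y: "y \<in> generate GG (range dconj)" "y \<in> Cen" "y \<in> carrier GG"
    using piece_generated[OF insert.prems(1)] generate_dconj_sub_Cen piece_in(2)[OF insert.prems(1)]
    unfolding y_def by auto
  have xc: "x \<in> carrier GG" by (rule CenD(1)[OF insert.prems(1)])
  have "x \<otimes>\<^bsub>GG\<^esub> inv\<^bsub>GG\<^esub> y \<in> Cen"
    using Cen_subgroup insert.prems(1) y(2) by (simp add: subgroup.m_closed subgroup.m_inv_closed)
  moreover have "moving (x \<otimes>\<^bsub>GG\<^esub> inv\<^bsub>GG\<^esub> y) \<subseteq> S"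
    using moving_remove_piece[OF insert.prems(1), of k] insert.prems(2) unfolding y_def by auto
  ultimately have "x \<otimes>\<^bsub>GG\<^esub> inv\<^bsub>GG\<^esub> y \<in> generate GG (range dconj)" by (rule insert.IH)
  moreover have "x \<otimes>\<^bsub>GG\<^esub> inv\<^bsub>GG\<^esub> y \<otimes>\<^bsub>GG\<^esub> y = x" using xc y(3) by (simp add: G.m_assoc)
  ultimately show ?case using generate.eng[OF _ y(1)] by metis
qed

theorem Cen_eq_generate: "Cen = generate GG (range dconj)"
  using Cen_generated_aux[OF moving_finite] generate_dconj_sub_Cen by blast

end

theorem lemma4p6:
  fixes r :: real and Lam A :: "real set" and a b d :: "real \<Rightarrow> real" and \<alpha>0 :: real
  assumes adm: "admissible r Lam A"
    and a_up: "a \<in> Fup r Lam A" and a_supp: "supp a = {0<..<r}"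
    and al0: "\<alpha>0 \<in> {0<..<r} \<inter> A"
    and b_up: "b \<in> Fup r Lam A"
    and b_supp: "supp b = {\<alpha>0<..<a \<alpha>0}"
    and d_gen: "d \<in> centralizer_in (Fgrp r Lam A) (Fsupp r Lam A {\<alpha>0<..<a \<alpha>0}) {b}"
    and d_generates: "generate (Fgrp r Lam A) {d}
        = centralizer_in (Fgrp r Lam A) (Fsupp r Lam A {\<alpha>0<..<a \<alpha>0}) {b}"
  shows "centralizer_in (Fgrp r Lam A) (carrier (Fgrp r Lam A))
           {inv\<^bsub>Fgrp r Lam A\<^esub> (a [^]\<^bsub>Fgrp r Lam A\<^esub> k) \<otimes>\<^bsub>Fgrp r Lam A\<^esub> b
              \<otimes>\<^bsub>Fgrp r Lam A\<^esub> (a [^]\<^bsub>Fgrp r Lam A\<^esub> k) | k :: int. True}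
       = generate (Fgrp r Lam A)
           {inv\<^bsub>Fgrp r Lam A\<^esub> (a [^]\<^bsub>Fgrp r Lam A\<^esub> k) \<otimes>\<^bsub>Fgrp r Lam A\<^esub> d
              \<otimes>\<^bsub>Fgrp r Lam A\<^esub> (a [^]\<^bsub>Fgrp r Lam A\<^esub> k) | k :: int. True}"
proof -
  interpret translates r Lam A a b d \<alpha>0
    by (intro translates.intro Fctx.intro translates_axioms.intro adm) (fact assms)+
  have "{inv\<^bsub>GG\<^esub> (a [^]\<^bsub>GG\<^esub> k) \<otimes>\<^bsub>GG\<^esub> b \<otimes>\<^bsub>GG\<^esub> (a [^]\<^bsub>GG\<^esub> k) | k :: int. True} = range bconj"
    and "{inv\<^bsub>GG\<^esub> (a [^]\<^bsub>GG\<^esub> k) \<otimes>\<^bsub>GG\<^esub> d \<otimes>\<^bsub>GG\<^esub> (a [^]\<^bsub>GG\<^esub> k) | k :: int. True} = range dconj"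
    unfolding bconj_def dconj_def apow_def by auto
  then show ?thesis using Cen_eq_generate unfolding Cen_def by simp
qed

end
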